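(* Let $f(x)=\frac1n\sum_{i=1}^nf_i(x)$ with each $f_i:\mathbb{R}^d\to\mathbb{R}$ differentiable and $\mu$-strongly convex ($\mu>0$), $x_\star$ the minimizer of $f$, and suppose there exists $\nu>0$ such that for all $x^1,\dots,x^n\in\mathbb{R}^d$, $$\frac1n\sum_{j=1}^n\Big\|\nabla f_j(x^j)-\frac1n\sum_{i=1}^n\nabla f_i(x^i)-\nabla f_j(x_\star)\Big\|^2\le\nu^2\frac1n\sum_{j=1}^n\|x^j-x_\star\|^2.$$ Let $x_0,w_0^1,\dots,w_0^n\in\mathbb{R}^d$ be arbitrary and run Point SAGA (see context). Then for any $\gamma>0$ and all $k\ge0$, $$\mathbb{E}[\Psi_k]\le\max\left\{\left(\frac1{1+\gamma\mu}\right)^k,\ \left(\frac{1}{1+\gamma\mu}\cdot\frac{\gamma\nu^2}{\mu n}+1-\frac1n\right)^k\right\}\Psi_0,\qquad \Psi_k:=\|x_k-x_\star\|^2+\gamma\mu\sum_{i=1}^n\|w_k^i-x_\star\|^2.$$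
   Context: Point SAGA: parameters $\gamma>0$, $x_0\in\mathbb{R}^d$, $w_0^1,\dots,w_0^n\in\mathbb{R}^d$. For $k\ge0$: sample $i_k$ uniformly from $[n]$ independently; $h_k=\nabla f_{i_k}(w_k^{i_k})-\frac1n\sum_{j=1}^n\nabla f_j(w_k^j)$; $x_{k+1}=\operatorname{prox}_{\gamma f_{i_k}}(x_k+\gamma h_k)$; $w_{k+1}^{i_k}=x_{k+1}$ and $w_{k+1}^j=w_k^j$ for $j\ne i_k$. $\operatorname{prox}_{\gamma\phi}(y):=\arg\min_x\{\phi(x)+\frac1{2\gamma}\|x-y\|^2\}$. $\mu$-strong convexity of $g$: $g(y)+\langle\nabla g(y),x-y\rangle+\frac{\mu}{2}\|x-y\|^2\le g(x)$ for all $x,y$. *)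

theory Defs
  imports "HOL-Analysis.Analysis" "HOL-Probability.Probability"
begin

definition prox :: "real \<Rightarrow> ('a::real_normed_vector \<Rightarrow> real) \<Rightarrow> 'a \<Rightarrow> 'a" where
  "prox \<gamma> \<phi> y = (ARG_MIN (\<lambda>x. \<phi> x + (norm (x - y))\<^sup>2 / (2 * \<gamma>)) x. True)"

definition saga_step ::
  "nat \<Rightarrow> (nat \<Rightarrow> 'a::real_inner \<Rightarrow> real) \<Rightarrow> (nat \<Rightarrow> 'a \<Rightarrow> 'a) \<Rightarrow> real
   \<Rightarrow> 'a \<times> (nat \<Rightarrow> 'a) \<Rightarrow> nat \<Rightarrow> 'a \<times> (nat \<Rightarrow> 'a)" where
  "saga_step n f g \<gamma> s i =
     (let x = fst s; w = snd s;
          h = g i (w i) - (1 / real n) *\<^sub>R (\<Sum>j<n. g j (w j));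
          x' = prox \<gamma> (f i) (x + \<gamma> *\<^sub>R h)
      in (x', w(i := x')))"

fun saga_pmf ::
  "nat \<Rightarrow> (nat \<Rightarrow> 'a::real_inner \<Rightarrow> real) \<Rightarrow> (nat \<Rightarrow> 'a \<Rightarrow> 'a) \<Rightarrow> real
   \<Rightarrow> 'a \<Rightarrow> (nat \<Rightarrow> 'a) \<Rightarrow> nat \<Rightarrow> ('a \<times> (nat \<Rightarrow> 'a)) pmf" where
  "saga_pmf n f g \<gamma> x0 w0 0 = return_pmf (x0, w0)"
| "saga_pmf n f g \<gamma> x0 w0 (Suc k) =
     bind_pmf (saga_pmf n f g \<gamma> x0 w0 k)
       (\<lambda>s. map_pmf (saga_step n f g \<gamma> s) (pmf_of_set {..<n}))"

definition Psi :: "nat \<Rightarrow> real \<Rightarrow> real \<Rightarrow> 'a::real_normed_vector \<Rightarrow> 'a \<times> (nat \<Rightarrow> 'a) \<Rightarrow> real" where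
  "Psi n \<gamma> \<mu> xs s = (norm (fst s - xs))\<^sup>2 + \<gamma> * \<mu> * (\<Sum>i<n. (norm (snd s i - xs))\<^sup>2)"

end

theory Submission
  imports Defs
begin

text \<open>Each proximal step is a resolvent step: p = prox gamma f_i y means p + gamma grad f_i(p) = y.
  As x* + gamma grad f_i(x*) is the corresponding point for x*, strong monotonicity of grad f_i
  makes the resolvent a 1/(1 + gamma mu)-contraction, so
  (1 + gamma mu)^2 |x_{k+1} - x*|^2 <= |x_k - x* + gamma (h_k - grad f_i(x*))|^2.
  The deviations h_k - grad f_i(x*) sum to zero over i, so averaging over the uniform index
  kills the cross term, and the variance assumption bounds their squared norms by
  nu^2 sum_j |w^j - x*|^2. Only one table entry is replaced per step, which gives the factor
  1 - 1/n on the table part of Psi. Hence the conditional expectation of Psi contracts by the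
  larger of the two rates, and the bound follows by induction along the Markov chain.\<close>

lemma strongly_convex_gradient_monotone:
  fixes F :: "'a::real_inner \<Rightarrow> real"
  assumes sc: "\<And>x y. F y + inner (G y) (x - y) + \<mu> / 2 * (norm (x - y))\<^sup>2 \<le> F x"
  shows "\<mu> * (norm (p - q))\<^sup>2 \<le> inner (G p - G q) (p - q)"
proof -
  have "F q + inner (G q) (p - q) + \<mu> / 2 * (norm (p - q))\<^sup>2 \<le> F p"
    and "F p - inner (G p) (p - q) + \<mu> / 2 * (norm (p - q))\<^sup>2 \<le> F q"
    using sc[of p q] sc[of q p] by (simp_all add: inner_diff_right norm_minus_commute)
  then show ?thesis by (simp add: inner_diff_left)
qed

lemma strongly_monotone_resolvent_contraction:
  fixes G :: "'a::real_inner \<Rightarrow> 'a"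
  assumes mono: "\<And>p q. \<mu> * (norm (p - q))\<^sup>2 \<le> inner (G p - G q) (p - q)"
    and "0 \<le> \<gamma>" "0 \<le> \<mu>"
  shows "(1 + \<gamma> * \<mu>)\<^sup>2 * (norm (p - q))\<^sup>2 \<le> (norm ((p + \<gamma> *\<^sub>R G p) - (q + \<gamma> *\<^sub>R G q)))\<^sup>2"
proof -
  let ?d = "(p + \<gamma> *\<^sub>R G p) - (q + \<gamma> *\<^sub>R G q)"
  have "(1 + \<gamma> * \<mu>) * (norm (p - q))\<^sup>2 \<le> (norm (p - q))\<^sup>2 + \<gamma> * inner (G p - G q) (p - q)"
    using mult_left_mono[OF mono, of \<gamma>] \<open>0 \<le> \<gamma>\<close> by (simp add: algebra_simps)
  also have "\<dots> = inner ?d (p - q)"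
    by (simp add: inner_diff_left inner_add_left power2_norm_eq_inner algebra_simps)
  also have "\<dots> \<le> norm ?d * norm (p - q)"
    by (rule norm_cauchy_schwarz)
  finally have "(1 + \<gamma> * \<mu>) * norm (p - q) \<le> norm ?d"
    by (cases "p = q") (auto simp: power2_eq_square)
  then have "((1 + \<gamma> * \<mu>) * norm (p - q))\<^sup>2 \<le> (norm ?d)\<^sup>2"
    using assms by (intro power_mono) auto
  then show ?thesis by (simp add: power_mult_distrib)
qed

lemma continuous_attains_global_min:
  fixes \<phi> :: "'a::heine_borel \<Rightarrow> real"
  assumes cont: "continuous_on UNIV \<phi>" and outside: "\<And>z. z \<notin> cball a R \<Longrightarrow> \<phi> a \<le> \<phi> z"
  shows "\<exists>p. \<forall>z. \<phi> p \<le> \<phi> z"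
proof (cases "0 \<le> R")
  case True
  then have "cball a R \<noteq> {}" by simp
  then obtain p where p: "p \<in> cball a R" "\<forall>z\<in>cball a R. \<phi> p \<le> \<phi> z"
    using continuous_attains_inf[OF compact_cball _ continuous_on_subset[OF cont subset_UNIV]] by blast
  moreover have "\<phi> p \<le> \<phi> a" using p True by simp
  ultimately have "\<phi> p \<le> \<phi> z" for z
    using outside[of z] by (cases "z \<in> cball a R") auto
  then show ?thesis by blast
next
  case False
  then show ?thesis using outside by auto
qed

text \<open>Outside the ball of radius 2 \<parallel>G a\<parallel>/\<mu> the quadratic growth beats the linear term.\<close>
lemma strongly_convex_ge_center_outside_ball:
  fixes F :: "'a::real_inner \<Rightarrow> real"
  assumes sc: "\<And>x y. F y + inner (G y) (x - y) + \<mu> / 2 * (norm (x - y))\<^sup>2 \<le> F x"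
    and "0 < \<mu>" and z: "z \<notin> cball a (2 * norm (G a) / \<mu>)"
  shows "F a \<le> F z"
proof -
  define r where "r = norm (z - a)"
  have "norm (G a) \<le> \<mu> / 2 * r"
    using z \<open>0 < \<mu>\<close> by (simp add: r_def dist_norm norm_minus_commute field_simps)
  then have "norm (G a) * r \<le> \<mu> / 2 * r * r"
    by (rule mult_right_mono) (simp add: r_def)
  moreover have "- (norm (G a) * r) \<le> inner (G a) (z - a)"
    using Cauchy_Schwarz_ineq2[of "G a" "z - a"] by (simp add: r_def)
  ultimately show ?thesis using sc[where x = z and y = a] by (simp add: r_def power2_eq_square)
qed

lemma has_derivative_prox_objective:
  fixes F :: "'a::real_inner \<Rightarrow> real"
  assumes "GDERIV F p :> G p" and "\<gamma> \<noteq> 0"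
  shows "GDERIV (\<lambda>x. F x + (norm (x - y))\<^sup>2 / (2 * \<gamma>)) p :> G p + (1 / \<gamma>) *\<^sub>R (p - y)"
  using assms unfolding gderiv_def power2_norm_eq_inner
  by (auto intro!: derivative_eq_intros
      simp: inner_add_right inner_diff_right inner_diff_left inner_commute field_simps)

lemma prox_resolvent_identity:
  fixes F :: "'a::euclidean_space \<Rightarrow> real"
  assumes grad: "\<And>x. GDERIV F x :> G x"
    and sc: "\<And>x y. F y + inner (G y) (x - y) + \<mu> / 2 * (norm (x - y))\<^sup>2 \<le> F x"
    and "0 < \<mu>" "0 < \<gamma>"
  shows "prox \<gamma> F y + \<gamma> *\<^sub>R G (prox \<gamma> F y) = y"
proof -
  define \<phi> where "\<phi> x = F x + (norm (x - y))\<^sup>2 / (2 * \<gamma>)" for x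
  define p where "p = prox \<gamma> F y"
  have "continuous_on UNIV F"
    using grad unfolding gderiv_def
    by (meson continuous_at_imp_continuous_on has_derivative_continuous)
  then have "continuous_on UNIV \<phi>"
    unfolding \<phi>_def using \<open>0 < \<gamma>\<close> by (intro continuous_intros) auto
  moreover have "\<phi> y \<le> \<phi> z" if "z \<notin> cball y (2 * norm (G y) / \<mu>)" for z
    using strongly_convex_ge_center_outside_ball[OF sc \<open>0 < \<mu>\<close> that] \<open>0 < \<gamma>\<close>
    by (simp add: \<phi>_def add_increasing2)
  ultimately have "\<exists>x. is_arg_min \<phi> (\<lambda>x. True) x"
    using continuous_attains_global_min by (metis is_arg_min_linorder)
  then have "is_arg_min \<phi> (\<lambda>x. True) p"
    unfolding p_def prox_def arg_min_def \<phi>_def by (rule someI_ex)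
  then have "\<forall>z\<in>UNIV. \<phi> p \<le> \<phi> z"
    by (simp add: is_arg_min_linorder)
  moreover have "GDERIV \<phi> p :> G p + (1 / \<gamma>) *\<^sub>R (p - y)"
    unfolding \<phi>_def using grad \<open>0 < \<gamma>\<close> by (intro has_derivative_prox_objective) auto
  ultimately have "(\<lambda>h. inner h (G p + (1 / \<gamma>) *\<^sub>R (p - y))) = (\<lambda>h. 0)"
    unfolding gderiv_def using differential_zero_maxmin[OF _ open_UNIV] by blast
  then have "G p + (1 / \<gamma>) *\<^sub>R (p - y) = 0"
    by (metis inner_eq_zero_iff)
  then have "\<gamma> *\<^sub>R (G p + (1 / \<gamma>) *\<^sub>R (p - y)) = 0" by simp
  then show ?thesis
    using \<open>0 < \<gamma>\<close> by (simp add: p_def algebra_simps)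
qed

lemma sum_fun_upd:
  fixes h :: "'b \<Rightarrow> 'c::ab_group_add"
  assumes "finite A" "i \<in> A"
  shows "(\<Sum>j\<in>A. h ((w(i := v)) j)) = (\<Sum>j\<in>A. h (w j)) - h (w i) + h v"
proof -
  have "(\<Sum>j\<in>A. h ((w(i := v)) j)) = (\<Sum>j\<in>A. h (w j) + (if i = j then h v - h (w i) else 0))"
    by (rule sum.cong) auto
  then show ?thesis
    using assms by (simp add: sum.distrib)
qed

lemma sum_norm_add_power2_centered:
  fixes b :: "'i \<Rightarrow> 'a::real_inner"
  assumes "(\<Sum>i\<in>I. b i) = 0"
  shows "(\<Sum>i\<in>I. (norm (u + b i))\<^sup>2) = real (card I) * (norm u)\<^sup>2 + (\<Sum>i\<in>I. (norm (b i))\<^sup>2)"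
proof -
  have "(\<Sum>i\<in>I. (norm (u + b i))\<^sup>2) = (\<Sum>i\<in>I. (norm u)\<^sup>2 + 2 * inner u (b i) + (norm (b i))\<^sup>2)"
    by (simp add: power2_norm_eq_inner inner_add_left inner_add_right inner_commute algebra_simps)
  also have "\<dots> = real (card I) * (norm u)\<^sup>2 + 2 * inner u (\<Sum>i\<in>I. b i) + (\<Sum>i\<in>I. (norm (b i))\<^sup>2)"
    by (simp add: sum.distrib sum_distrib_left inner_sum_right)
  finally show ?thesis using assms by simp
qed

lemma power_max_nonneg:
  fixes a b :: real
  assumes "0 \<le> a" "0 \<le> b"
  shows "max a b ^ k = max (a ^ k) (b ^ k)"
proof (cases "a \<le> b")
  case True
  then show ?thesis using assms power_mono[of a b k] by (simp add: max_def)
next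
  case False
  then show ?thesis using assms power_mono[of b a k] by (auto simp: max_def)
qed

lemma expectation_markov_chain_le_power:
  fixes V :: "'s \<Rightarrow> real" and K :: "'s \<Rightarrow> 's pmf"
  assumes p_0: "p 0 = return_pmf s\<^sub>0" and p_Suc: "\<And>k. p (Suc k) = bind_pmf (p k) K"
    and finite: "\<And>s. finite (set_pmf (K s))"
    and V_nonneg: "\<And>s. 0 \<le> V s" and "0 \<le> m"
    and drift: "\<And>s. measure_pmf.expectation (K s) V \<le> m * V s"
  shows "measure_pmf.expectation (p k) V \<le> m ^ k * V s\<^sub>0"
proof -
  have drift_nn: "(\<integral>\<^sup>+y. V y \<partial>K s) \<le> m * V s" for s
  proof -
    have "(\<integral>\<^sup>+y. V y \<partial>K s) = measure_pmf.expectation (K s) V"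
      using finite V_nonneg
      by (intro nn_integral_eq_integral integrable_measure_pmf_finite) auto
    then show ?thesis
      using drift ennreal_leI by presburger
  qed
  have "(\<integral>\<^sup>+s. V s \<partial>p k) \<le> ennreal (m ^ k * V s\<^sub>0)"
  proof (induction k)
    case 0
    then show ?case by (simp add: p_0)
  next
    case (Suc k)
    have "(\<integral>\<^sup>+s. V s \<partial>p (Suc k)) = (\<integral>\<^sup>+s. (\<integral>\<^sup>+y. V y \<partial>K s) \<partial>p k)"
      by (simp add: p_Suc nn_integral_bind_pmf)
    also have "\<dots> \<le> (\<integral>\<^sup>+s. ennreal m * V s \<partial>p k)"
      using drift_nn \<open>0 \<le> m\<close> V_nonneg by (intro nn_integral_mono) (simp add: ennreal_mult)
    also have "\<dots> = ennreal m * (\<integral>\<^sup>+s. V s \<partial>p k)"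
      by (rule nn_integral_cmult) simp
    also have "\<dots> \<le> ennreal m * ennreal (m ^ k * V s\<^sub>0)"
      by (rule mult_left_mono[OF Suc.IH]) simp
    also have "\<dots> = ennreal (m ^ Suc k * V s\<^sub>0)"
      using \<open>0 \<le> m\<close> V_nonneg by (simp add: ennreal_mult[symmetric] mult.assoc)
    finally show ?case .
  qed
  then have "enn2real (\<integral>\<^sup>+s. V s \<partial>p k) \<le> m ^ k * V s\<^sub>0"
    using \<open>0 \<le> m\<close> V_nonneg by (simp add: enn2real_leI)
  moreover have "measure_pmf.expectation (p k) V = enn2real (\<integral>\<^sup>+s. V s \<partial>p k)"
    using V_nonneg by (intro integral_eq_nn_integral) auto
  ultimately show ?thesis by simp
qed

locale point_saga =
  fixes n :: nat
    and f :: "nat \<Rightarrow> 'a::euclidean_space \<Rightarrow> real"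
    and g :: "nat \<Rightarrow> 'a \<Rightarrow> 'a"
    and \<mu> \<nu> \<gamma> :: real
    and xs :: 'a
  assumes n_pos: "n \<ge> 1"
    and grad: "\<And>i x. i < n \<Longrightarrow> GDERIV (f i) x :> g i x"
    and mu_pos: "\<mu> > 0"
    and strongly_convex: "\<And>i x y. i < n \<Longrightarrow>
          f i y + inner (g i y) (x - y) + \<mu> / 2 * (norm (x - y))\<^sup>2 \<le> f i x"
    and nu_bound: "\<And>X :: nat \<Rightarrow> 'a.
          (1 / real n) * (\<Sum>j<n. (norm (g j (X j) - (1 / real n) *\<^sub>R (\<Sum>i<n. g i (X i)) - g j xs))\<^sup>2)
          \<le> \<nu>\<^sup>2 * ((1 / real n) * (\<Sum>j<n. (norm (X j - xs))\<^sup>2))"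
    and gamma_pos: "\<gamma> > 0"
begin

definition saga_direction :: "(nat \<Rightarrow> 'a) \<Rightarrow> nat \<Rightarrow> 'a" where
  "saga_direction w i = g i (w i) - (1 / real n) *\<^sub>R (\<Sum>j<n. g j (w j))"

definition saga_point :: "'a \<Rightarrow> (nat \<Rightarrow> 'a) \<Rightarrow> nat \<Rightarrow> 'a" where
  "saga_point x w i = prox \<gamma> (f i) (x + \<gamma> *\<^sub>R saga_direction w i)"

definition contraction_factor :: real where
  "contraction_factor =
     max (1 / (1 + \<gamma> * \<mu>)) (1 / (1 + \<gamma> * \<mu>) * (\<gamma> * \<nu>\<^sup>2 / (\<mu> * real n)) + 1 - 1 / real n)"

lemma saga_step_eq: "saga_step n f g \<gamma> (x, w) i = (saga_point x w i, w(i := saga_point x w i))"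
  by (simp add: saga_step_def saga_point_def saga_direction_def Let_def)

lemma contraction_factor_nonneg: "0 \<le> contraction_factor"
  unfolding contraction_factor_def using gamma_pos mu_pos by (simp add: max.coboundedI1)

lemma contraction_factor_power:
  "contraction_factor ^ k = max ((1 / (1 + \<gamma> * \<mu>)) ^ k)
     ((1 / (1 + \<gamma> * \<mu>) * (\<gamma> * \<nu>\<^sup>2 / (\<mu> * real n)) + 1 - 1 / real n) ^ k)"
proof -
  have "1 / real n \<le> 1" using n_pos by simp
  moreover have "0 \<le> 1 / (1 + \<gamma> * \<mu>) * (\<gamma> * \<nu>\<^sup>2 / (\<mu> * real n))"
    using gamma_pos mu_pos by (simp add: add_nonneg_nonneg)
  ultimately have "0 \<le> 1 / (1 + \<gamma> * \<mu>) * (\<gamma> * \<nu>\<^sup>2 / (\<mu> * real n)) + 1 - 1 / real n"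
    by linarith
  moreover have "0 \<le> 1 / (1 + \<gamma> * \<mu>)"
    using gamma_pos mu_pos by simp
  ultimately show ?thesis
    unfolding contraction_factor_def by (intro power_max_nonneg)
qed

lemma Psi_nonneg: "0 \<le> Psi n \<gamma> \<mu> xs s"
  unfolding Psi_def using gamma_pos mu_pos by (simp add: sum_nonneg)

text \<open>The variance bound at X = xs forces the gradients to sum to zero: xs is a stationary point.\<close>
lemma sum_gradient_at_optimum: "(\<Sum>i<n. g i xs) = 0"
proof -
  have "(1 / real n) * (real n * (norm ((1 / real n) *\<^sub>R (\<Sum>i<n. g i xs)))\<^sup>2) \<le> 0"
    using nu_bound[of "\<lambda>_. xs"] by simp
  then show ?thesis using n_pos by simp
qed

lemma sum_saga_direction_deviation: "(\<Sum>i<n. saga_direction w i - g i xs) = 0"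
  using n_pos
  by (simp add: saga_direction_def sum_subtractf sum_gradient_at_optimum sum_constant_scaleR)

lemma sum_saga_direction_deviation_le:
  "(\<Sum>i<n. (norm (saga_direction w i - g i xs))\<^sup>2) \<le> \<nu>\<^sup>2 * (\<Sum>j<n. (norm (w j - xs))\<^sup>2)"
proof -
  have "(1 / real n) * (\<Sum>i<n. (norm (saga_direction w i - g i xs))\<^sup>2)
      \<le> (1 / real n) * (\<nu>\<^sup>2 * (\<Sum>j<n. (norm (w j - xs))\<^sup>2))"
    using nu_bound[of w] by (simp add: saga_direction_def)
  then show ?thesis using n_pos by (simp add: divide_le_cancel)
qed

lemma saga_point_contraction:
  assumes "i < n"
  shows "(1 + \<gamma> * \<mu>)\<^sup>2 * (norm (saga_point x w i - xs))\<^sup>2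
    \<le> (norm (x - xs + \<gamma> *\<^sub>R (saga_direction w i - g i xs)))\<^sup>2"
proof -
  let ?p = "saga_point x w i"
  have "?p + \<gamma> *\<^sub>R g i ?p = x + \<gamma> *\<^sub>R saga_direction w i"
    unfolding saga_point_def
    by (rule prox_resolvent_identity[OF grad strongly_convex]) (use assms mu_pos gamma_pos in auto)
  moreover have "\<mu> * (norm (p - q))\<^sup>2 \<le> inner (g i p - g i q) (p - q)" for p q
    by (rule strongly_convex_gradient_monotone[OF strongly_convex[OF assms]])
  then have "(1 + \<gamma> * \<mu>)\<^sup>2 * (norm (?p - xs))\<^sup>2
      \<le> (norm ((?p + \<gamma> *\<^sub>R g i ?p) - (xs + \<gamma> *\<^sub>R g i xs)))\<^sup>2"
    using mu_pos gamma_pos by (intro strongly_monotone_resolvent_contraction) auto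
  ultimately show ?thesis
    by (simp add: algebra_simps)
qed

lemma sum_saga_point_le:
  "(1 + \<gamma> * \<mu>)\<^sup>2 * (\<Sum>i<n. (norm (saga_point x w i - xs))\<^sup>2)
    \<le> real n * (norm (x - xs))\<^sup>2 + \<gamma>\<^sup>2 * \<nu>\<^sup>2 * (\<Sum>j<n. (norm (w j - xs))\<^sup>2)"
proof -
  have "(1 + \<gamma> * \<mu>)\<^sup>2 * (\<Sum>i<n. (norm (saga_point x w i - xs))\<^sup>2)
      \<le> (\<Sum>i<n. (norm (x - xs + \<gamma> *\<^sub>R (saga_direction w i - g i xs)))\<^sup>2)"
    unfolding sum_distrib_left by (intro sum_mono saga_point_contraction) simp
  also have "\<dots> = real n * (norm (x - xs))\<^sup>2 + \<gamma>\<^sup>2 * (\<Sum>i<n. (norm (saga_direction w i - g i xs))\<^sup>2)"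
    using sum_norm_add_power2_centered[of "\<lambda>i. \<gamma> *\<^sub>R (saga_direction w i - g i xs)" "{..<n}" "x - xs"]
    by (simp add: sum_saga_direction_deviation flip: scaleR_right.sum)
      (simp add: power_mult_distrib sum_distrib_left)
  also have "\<dots> \<le> real n * (norm (x - xs))\<^sup>2 + \<gamma>\<^sup>2 * (\<nu>\<^sup>2 * (\<Sum>j<n. (norm (w j - xs))\<^sup>2))"
    by (intro add_left_mono mult_left_mono sum_saga_direction_deviation_le) simp
  finally show ?thesis by simp
qed

lemma Psi_saga_step:
  assumes "i < n"
  shows "Psi n \<gamma> \<mu> xs (saga_step n f g \<gamma> (x, w) i)
    = (1 + \<gamma> * \<mu>) * (norm (saga_point x w i - xs))\<^sup>2
      + \<gamma> * \<mu> * ((\<Sum>j<n. (norm (w j - xs))\<^sup>2) - (norm (w i - xs))\<^sup>2)"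
proof -
  have upd: "(\<Sum>j<n. (norm ((w(i := saga_point x w i)) j - xs))\<^sup>2)
      = (\<Sum>j<n. (norm (w j - xs))\<^sup>2) - (norm (w i - xs))\<^sup>2 + (norm (saga_point x w i - xs))\<^sup>2"
    by (rule sum_fun_upd) (use assms in auto)
  show ?thesis
    unfolding saga_step_eq Psi_def fst_conv snd_conv upd by (simp add: algebra_simps)
qed

lemma Psi_saga_step_average_le:
  "(\<Sum>i<n. Psi n \<gamma> \<mu> xs (saga_step n f g \<gamma> (x, w) i)) / real n \<le> contraction_factor * Psi n \<gamma> \<mu> xs (x, w)"
proof -
  define c where "c = 1 + \<gamma> * \<mu>"
  define \<rho> where "\<rho> = 1 / c * (\<gamma> * \<nu>\<^sup>2 / (\<mu> * real n)) + 1 - 1 / real n"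
  define D where "D = (norm (x - xs))\<^sup>2"
  define S where "S = (\<Sum>j<n. (norm (w j - xs))\<^sup>2)"
  define T where "T = (\<Sum>i<n. (norm (saga_point x w i - xs))\<^sup>2)"
  have c_pos: "0 < c" and n_gt0: "0 < real n"
    using gamma_pos mu_pos n_pos by (simp_all add: c_def add_pos_nonneg)
  have "(\<Sum>i<n. Psi n \<gamma> \<mu> xs (saga_step n f g \<gamma> (x, w) i))
      = (\<Sum>i<n. c * (norm (saga_point x w i - xs))\<^sup>2 + \<gamma> * \<mu> * (S - (norm (w i - xs))\<^sup>2))"
    by (rule sum.cong) (simp_all add: Psi_saga_step c_def S_def)
  also have "\<dots> = c * T + \<gamma> * \<mu> * (real n * S - S)"
    by (simp add: T_def S_def sum.distrib sum_distrib_left sum_subtractf right_diff_distrib mult_ac)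
  also have "c * T \<le> (real n * D + \<gamma>\<^sup>2 * \<nu>\<^sup>2 * S) / c"
    using sum_saga_point_le[of x w] c_pos
    by (simp add: c_def D_def S_def T_def field_simps power2_eq_square)
  finally have "(\<Sum>i<n. Psi n \<gamma> \<mu> xs (saga_step n f g \<gamma> (x, w) i)) / real n
      \<le> ((real n * D + \<gamma>\<^sup>2 * \<nu>\<^sup>2 * S) / c + \<gamma> * \<mu> * (real n * S - S)) / real n"
    using n_gt0 by (simp add: divide_right_mono)
  also have "\<dots> = D / c + \<gamma> * \<mu> * \<rho> * S"
    using c_pos mu_pos n_gt0 by (simp add: \<rho>_def field_simps power2_eq_square)
  also have "\<dots> \<le> contraction_factor * D + \<gamma> * \<mu> * contraction_factor * S"
  proof (intro add_mono mult_right_mono mult_left_mono)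
    show "D / c \<le> contraction_factor * D"
      using mult_right_mono[of "1 / c" contraction_factor D] by (simp add: contraction_factor_def c_def D_def)
    show "\<rho> \<le> contraction_factor" by (simp add: contraction_factor_def \<rho>_def c_def)
  qed (use gamma_pos mu_pos in \<open>simp_all add: S_def sum_nonneg\<close>)
  also have "\<dots> = contraction_factor * Psi n \<gamma> \<mu> xs (x, w)"
    by (simp add: Psi_def D_def S_def algebra_simps)
  finally show ?thesis .
qed

lemma expectation_Psi_saga_pmf_le:
  "measure_pmf.expectation (saga_pmf n f g \<gamma> x0 w0 k) (Psi n \<gamma> \<mu> xs)
    \<le> contraction_factor ^ k * Psi n \<gamma> \<mu> xs (x0, w0)"
proof (rule expectation_markov_chain_le_power)
  let ?K = "\<lambda>s. map_pmf (saga_step n f g \<gamma> s) (pmf_of_set {..<n})"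
  have ne: "{..<n} \<noteq> {}" using n_pos by (auto simp: lessThan_empty_iff)
  show "saga_pmf n f g \<gamma> x0 w0 (Suc k) = bind_pmf (saga_pmf n f g \<gamma> x0 w0 k) ?K" for k
    by simp
  show "finite (set_pmf (?K s))" for s
    using ne by simp
  show "measure_pmf.expectation (?K s) (Psi n \<gamma> \<mu> xs) \<le> contraction_factor * Psi n \<gamma> \<mu> xs s" for s
    using ne Psi_saga_step_average_le[of "fst s" "snd s"] by (simp add: integral_pmf_of_set)
qed (simp_all add: contraction_factor_nonneg Psi_nonneg)

end

theorem mainTheorem12:
  fixes n :: nat
    and f :: "nat \<Rightarrow> 'a::euclidean_space \<Rightarrow> real"
    and g :: "nat \<Rightarrow> 'a \<Rightarrow> 'a"
    and \<mu> \<nu> \<gamma> :: real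
    and xs x0 :: 'a
    and w0 :: "nat \<Rightarrow> 'a"
  assumes n_pos: "n \<ge> 1"
    and grad: "\<And>i x. i < n \<Longrightarrow> GDERIV (f i) x :> g i x"
    and mu_pos: "\<mu> > 0"
    and strongly_convex: "\<And>i x y. i < n \<Longrightarrow>
          f i y + inner (g i y) (x - y) + \<mu> / 2 * (norm (x - y))\<^sup>2 \<le> f i x"
    and minimizer: "\<And>x. (1 / real n) * (\<Sum>i<n. f i xs) \<le> (1 / real n) * (\<Sum>i<n. f i x)"
    and nu_pos: "\<nu> > 0"
    and nu_bound: "\<And>X :: nat \<Rightarrow> 'a.
          (1 / real n) * (\<Sum>j<n. (norm (g j (X j) - (1 / real n) *\<^sub>R (\<Sum>i<n. g i (X i)) - g j xs))\<^sup>2)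
          \<le> \<nu>\<^sup>2 * ((1 / real n) * (\<Sum>j<n. (norm (X j - xs))\<^sup>2))"
    and gamma_pos: "\<gamma> > 0"
  shows "measure_pmf.expectation (saga_pmf n f g \<gamma> x0 w0 k) (Psi n \<gamma> \<mu> xs)
           \<le> max ((1 / (1 + \<gamma> * \<mu>)) ^ k)
                  ((1 / (1 + \<gamma> * \<mu>) * (\<gamma> * \<nu>\<^sup>2 / (\<mu> * real n)) + 1 - 1 / real n) ^ k)
             * Psi n \<gamma> \<mu> xs (x0, w0)"
proof -
  interpret point_saga n f g \<mu> \<nu> \<gamma> xs
    using n_pos grad mu_pos strongly_convex nu_bound gamma_pos by unfold_locales
  show ?thesis
    using expectation_Psi_saga_pmf_le[of x0 w0 k] by (simp only: contraction_factor_power)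
qed

end
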